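(* Let $\mathcal R$ be a semi-finite CCTRS and $s\in\mathcal T(\mathcal F,\mathcal V)$. Then $s$ is not quasi-decreasing if and only if $\mathrm{label}(s)\rightharpoonup^\infty$.
   Context: Terms are built from a signature $\mathcal F$ and variables $\mathcal V$. An (oriented) conditional rewrite rule has the form $\ell\to r\Leftarrow a_1\approx b_1,\dots,a_k\approx b_k$ with $k\ge0$; $s\to_{\mathcal R}t$ iff there are a position $p$, a rule and a substitution $\sigma$ with $s|_p=\ell\sigma$, $t=s[r\sigma]_p$ and $a_j\sigma\to_{\mathcal R}^*b_j\sigma$ for all $j$ (formally the union of the usual approximations $\to_{\mathcal R_i}$). Defined symbols are root symbols of left-hand sides, others are constructors; constructor terms contain only constructors and variables. $\mathcal R{\restriction}f$ is the set of rules whose left-hand side has root $f$; $\mathcal R$ is semi-finite if each $\mathcal R{\restriction}f$ is finite. A CCTRS is a set $\mathcal R$ of rules each of the form $f(\ell_1,\dots,\ell_n)\to r\Leftarrow a_1\approx b_1,\dots,a_k\approx b_k$ where $\ell_1,\dots,\ell_n,b_1,\dots,b_k$ are constructor terms, the terms $f(\ell_1,\dots,\ell_n),b_1,\dots,b_k$ pairwise have no common variables, $\mathrm{Var}(r)\subseteq\mathrm{Var}(\ell_1,\dots,\ell_n,b_1,\dots,b_k)$ and $\mathrm{Var}(a_i)\subseteq\mathrm{Var}(\ell_1,\dots,\ell_n,b_1,\dots,b_{i-1})$. Write $s\sqsupset t$ if there are a position $p$, a rule $\ell\to r\Leftarrow a_1\approx b_1,\dots,a_k\approx b_k$, a substitution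 $\sigma$ and $1\le i\le k$ with $s|_p=\ell\sigma$, $a_j\sigma\to^* b_j\sigma$ for $1\le j<i$, and $t=a_i\sigma$. A term $s$ is quasi-decreasing if there is no infinite sequence $s=u_0\,(\to\cup\sqsupset)\,u_1\,(\to\cup\sqsupset)\cdots$. Labeled terms: the labeled signature $\mathcal G$ consists of the constructors of $\mathcal F$ together with a symbol $f_R$ (same arity as $f$) for every defined $f$ and every $R\subseteq\mathcal R{\restriction}f$. $\mathrm{label}(t)$ replaces every defined $f$ by $f_{\mathcal R\restriction f}$; $\mathrm{erase}$ removes all labels. A labeled normal form is a term built only from constructors, symbols $f_\emptyset$, and variables. The labeled step relation $\rightharpoonup$ is defined inductively: $s\rightharpoonup t$ if either (i) there are a position $p$ and a rule $\rho\colon\ell\to r\Leftarrow c$ with $s|_p=f_R(s_1,\dots,s_n)$, $\rho\in R$, $t=s[f_{R\setminus\{\rho\}}(s_1,\dots,s_n)]_p$, and linear labeled normal forms $u_1,\dots,u_n$ on fresh variables and $\sigma$ with $s|_p=f_R(u_1,\dots,u_n)\sigma$ and $f(\mathrm{erase}(u_1),\dots,\mathrm{erase}(u_n))$ not unifiable with $\ell$; or (ii) there are $p$, a rule $\rho\colon f(\ell_1,\dots,\ell_n)\to r\Leftarrow a_1\approx b_1,\dots,a_k\approx b_k$, $\sigma$ and $0\le j\le k$ with $s|_p=f_R(\ell_1\sigma,\dots,\ell_n\sigma)$, $\rho\in R$, $\mathrm{label}(a_i)\sigma\rightharpoonup^*b_i\sigma$ for $1\le i\le j$, and either $j=k$ and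 $t=s[\mathrm{label}(r)\sigma]_p$, or $j<k$, $\mathrm{label}(a_{j+1})\sigma\rightharpoonup^*u\tau$ for some linear labeled normal form $u$ with $\mathrm{erase}(u)$ not unifiable with $b_{j+1}$ and some $\tau$, and $t=s[f_{R\setminus\{\rho\}}(\ell_1\sigma,\dots,\ell_n\sigma)]_p$. Further $s\rightharpoonup_\rhd t$ if there are a position $p$, a rule $\rho$ as in (ii), $\sigma$ and $0\le j<k$ with $s|_p=f_R(\ell_1\sigma,\dots,\ell_n\sigma)$, $\rho\in R$, $\mathrm{label}(a_i)\sigma\rightharpoonup^*b_i\sigma$ for $1\le i\le j$, and $t=\mathrm{label}(a_{j+1})\sigma$. $s\rightharpoonup^\infty$ means there is an infinite sequence $s=s_0\,(\rightharpoonup\cup\rightharpoonup_\rhd)\,s_1\,(\rightharpoonup\cup\rightharpoonup_\rhd)\cdots$. *)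

theory Defs
  imports Main
begin

datatype ('f, 'v) "term" = Var 'v | Fun 'f "('f, 'v) term list"

type_synonym pos = "nat list"

inductive is_pos :: "('f, 'v) term \<Rightarrow> pos \<Rightarrow> bool" where
  root_pos: "is_pos t []"
| arg_pos: "i < length ts \<Longrightarrow> is_pos (ts ! i) p \<Longrightarrow> is_pos (Fun f ts) (i # p)"

definition poss :: "('f, 'v) term \<Rightarrow> pos set" where
  "poss t = {p. is_pos t p}"

fun subt_at :: "('f, 'v) term \<Rightarrow> pos \<Rightarrow> ('f, 'v) term" where
  "subt_at t [] = t"
| "subt_at (Fun f ts) (i # p) = subt_at (ts ! i) p"
| "subt_at (Var x) (i # p) = Var x"

fun replace_at :: "('f, 'v) term \<Rightarrow> pos \<Rightarrow> ('f, 'v) term \<Rightarrow> ('f, 'v) term" where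
  "replace_at t [] u = u"
| "replace_at (Fun f ts) (i # p) u = Fun f (ts[i := replace_at (ts ! i) p u])"
| "replace_at (Var x) (i # p) u = Var x"

fun subst :: "('v \<Rightarrow> ('f, 'v) term) \<Rightarrow> ('f, 'v) term \<Rightarrow> ('f, 'v) term" where
  "subst \<sigma> (Var x) = \<sigma> x"
| "subst \<sigma> (Fun f ts) = Fun f (map (subst \<sigma>) ts)"

fun vars_list :: "('f, 'v) term \<Rightarrow> 'v list" where
  "vars_list (Var x) = [x]"
| "vars_list (Fun f ts) = concat (map vars_list ts)"

definition vars :: "('f, 'v) term \<Rightarrow> 'v set" where
  "vars t = set (vars_list t)"

fun funs_list :: "('f, 'v) term \<Rightarrow> 'f list" where
  "funs_list (Var x) = []"
| "funs_list (Fun f ts) = f # concat (map funs_list ts)"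

definition funs :: "('f, 'v) term \<Rightarrow> 'f set" where
  "funs t = set (funs_list t)"

fun root :: "('f, 'v) term \<Rightarrow> 'f option" where
  "root (Var x) = None"
| "root (Fun f ts) = Some f"

definition linear_list :: "('f, 'v) term list \<Rightarrow> bool" where
  "linear_list ts = distinct (concat (map vars_list ts))"

definition linear :: "('f, 'v) term \<Rightarrow> bool" where
  "linear t = distinct (vars_list t)"

text \<open>Unifiability of two terms after renaming them apart (the terms are
  considered on disjoint (fresh) variables), hence two independent substitutions.\<close>
definition unifiable_apart :: "('f, 'v) term \<Rightarrow> ('f, 'v) term \<Rightarrow> bool" where
  "unifiable_apart s t = (\<exists>\<sigma> \<tau>. subst \<sigma> s = subst \<tau> t)"

text \<open>A rule  l \<rightarrow> r \<Leftarrow> a1 \<approx> b1, ..., ak \<approx> bk  is a triple (l, r, [(a1,b1),...,(ak,bk)]).\<close>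
type_synonym ('f, 'v) crule = "('f, 'v) term \<times> ('f, 'v) term \<times> (('f, 'v) term \<times> ('f, 'v) term) list"

definition defined :: "('f, 'v) crule set \<Rightarrow> 'f \<Rightarrow> bool" where
  "defined R f = (\<exists>\<rho> \<in> R. root (fst \<rho>) = Some f)"

definition rules_of :: "('f, 'v) crule set \<Rightarrow> 'f \<Rightarrow> ('f, 'v) crule set" where
  "rules_of R f = {\<rho> \<in> R. root (fst \<rho>) = Some f}"

definition constructor_term :: "('f, 'v) crule set \<Rightarrow> ('f, 'v) term \<Rightarrow> bool" where
  "constructor_term R t = (\<forall>f \<in> funs t. \<not> defined R f)"

definition semi_finite :: "('f, 'v) crule set \<Rightarrow> bool" where
  "semi_finite R = (\<forall>f. finite (rules_of R f))"

definition cctrs :: "('f, 'v) crule set \<Rightarrow> bool" where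
  "cctrs R = (\<forall>(l, r, cs) \<in> R.
     (\<exists>f ls. l = Fun f ls \<and> (\<forall>li \<in> set ls. constructor_term R li)) \<and>
     (\<forall>(a, b) \<in> set cs. constructor_term R b) \<and>
     (let ts = l # map snd cs in
        \<forall>i < length ts. \<forall>j < length ts. i \<noteq> j \<longrightarrow> vars (ts ! i) \<inter> vars (ts ! j) = {}) \<and>
     vars r \<subseteq> vars l \<union> (\<Union>(a, b) \<in> set cs. vars b) \<and>
     (\<forall>i < length cs. vars (fst (cs ! i)) \<subseteq> vars l \<union> (\<Union>j < i. vars (snd (cs ! j)))))"

text \<open>Conditional rewrite relation (least fixed point = union of the approximations).\<close>
inductive cstep :: "('f, 'v) crule set \<Rightarrow> ('f, 'v) term \<Rightarrow> ('f, 'v) term \<Rightarrow> bool"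
  for R :: "('f, 'v) crule set" where
  "p \<in> poss s \<Longrightarrow> (l, r, cs) \<in> R \<Longrightarrow> subt_at s p = subst \<sigma> l \<Longrightarrow>
   (\<forall>i < length cs. (cstep R)\<^sup>*\<^sup>* (subst \<sigma> (fst (cs ! i))) (subst \<sigma> (snd (cs ! i)))) \<Longrightarrow>
   cstep R s (replace_at s p (subst \<sigma> r))"

text \<open>The relation s \<sqsupset> t (condition indices are 0-based here).\<close>
definition cond_sub :: "('f, 'v) crule set \<Rightarrow> ('f, 'v) term \<Rightarrow> ('f, 'v) term \<Rightarrow> bool" where
  "cond_sub R s t = (\<exists>p l r cs \<sigma> i. p \<in> poss s \<and> (l, r, cs) \<in> R \<and> subt_at s p = subst \<sigma> l \<and>
     i < length cs \<and>
     (\<forall>j < i. (cstep R)\<^sup>*\<^sup>* (subst \<sigma> (fst (cs ! j))) (subst \<sigma> (snd (cs ! j)))) \<and>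
     t = subst \<sigma> (fst (cs ! i)))"

definition infinite_seq_from :: "('a \<Rightarrow> 'a \<Rightarrow> bool) \<Rightarrow> 'a \<Rightarrow> bool" where
  "infinite_seq_from S s = (\<exists>u :: nat \<Rightarrow> 'a. u 0 = s \<and> (\<forall>i. S (u i) (u (Suc i))))"

definition quasi_decreasing :: "('f, 'v) crule set \<Rightarrow> ('f, 'v) term \<Rightarrow> bool" where
  "quasi_decreasing R s = (\<not> infinite_seq_from (\<lambda>x y. cstep R x y \<or> cond_sub R x y) s)"

text \<open>Labeled symbols: (c, None) for a constructor c, (f, Some Q) for f_Q with Q a set of rules.\<close>
type_synonym ('f, 'v) lterm = "('f \<times> ('f, 'v) crule set option, 'v) term"

fun label :: "('f, 'v) crule set \<Rightarrow> ('f, 'v) term \<Rightarrow> ('f, 'v) lterm" where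
  "label R (Var x) = Var x"
| "label R (Fun f ts) = Fun (f, if defined R f then Some (rules_of R f) else None) (map (label R) ts)"

fun erase :: "('f \<times> 'l, 'v) term \<Rightarrow> ('f, 'v) term" where
  "erase (Var x) = Var x"
| "erase (Fun g ts) = Fun (fst g) (map erase ts)"

definition lnf :: "('f, 'v) crule set \<Rightarrow> ('f, 'v) lterm \<Rightarrow> bool" where
  "lnf R u = (\<forall>(g, lab) \<in> funs u. (\<not> defined R g \<and> lab = None) \<or> (defined R g \<and> lab = Some {}))"

text \<open>The labeled step relation (condition indices 0-based).\<close>
inductive lstep :: "('f, 'v) crule set \<Rightarrow> ('f, 'v) lterm \<Rightarrow> ('f, 'v) lterm \<Rightarrow> bool"
  for R :: "('f, 'v) crule set" where
  remove_nonunif: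
  "p \<in> poss s \<Longrightarrow> subt_at s p = Fun (f, Some Q) ss \<Longrightarrow> \<rho> \<in> Q \<Longrightarrow> \<rho> = (l, r, cs) \<Longrightarrow>
   length us = length ss \<Longrightarrow> (\<forall>u \<in> set us. lnf R u) \<Longrightarrow> linear_list us \<Longrightarrow>
   ss = map (subst \<sigma>) us \<Longrightarrow>
   \<not> unifiable_apart (Fun f (map erase us)) l \<Longrightarrow>
   t = replace_at s p (Fun (f, Some (Q - {\<rho>})) ss) \<Longrightarrow>
   lstep R s t"
| apply_rule:
  "p \<in> poss s \<Longrightarrow> \<rho> \<in> Q \<Longrightarrow> \<rho> = (Fun f ls, r, cs) \<Longrightarrow>
   subt_at s p = Fun (f, Some Q) (map (\<lambda>li. subst \<sigma> (label R li)) ls) \<Longrightarrow>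
   (\<forall>i < length cs. (lstep R)\<^sup>*\<^sup>* (subst \<sigma> (label R (fst (cs ! i)))) (subst \<sigma> (label R (snd (cs ! i))))) \<Longrightarrow>
   t = replace_at s p (subst \<sigma> (label R r)) \<Longrightarrow>
   lstep R s t"
| remove_failed_cond:
  "p \<in> poss s \<Longrightarrow> \<rho> \<in> Q \<Longrightarrow> \<rho> = (Fun f ls, r, cs) \<Longrightarrow>
   subt_at s p = Fun (f, Some Q) (map (\<lambda>li. subst \<sigma> (label R li)) ls) \<Longrightarrow>
   j < length cs \<Longrightarrow>
   (\<forall>i < j. (lstep R)\<^sup>*\<^sup>* (subst \<sigma> (label R (fst (cs ! i)))) (subst \<sigma> (label R (snd (cs ! i))))) \<Longrightarrow>
   (lstep R)\<^sup>*\<^sup>* (subst \<sigma> (label R (fst (cs ! j)))) (subst \<tau> u) \<Longrightarrow>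
   linear u \<Longrightarrow> lnf R u \<Longrightarrow> \<not> unifiable_apart (erase u) (snd (cs ! j)) \<Longrightarrow>
   t = replace_at s p (Fun (f, Some (Q - {\<rho>})) (map (\<lambda>li. subst \<sigma> (label R li)) ls)) \<Longrightarrow>
   lstep R s t"

definition lstep_cond :: "('f, 'v) crule set \<Rightarrow> ('f, 'v) lterm \<Rightarrow> ('f, 'v) lterm \<Rightarrow> bool" where
  "lstep_cond R s t = (\<exists>p \<rho> Q f ls r cs \<sigma> j. p \<in> poss s \<and> \<rho> \<in> Q \<and> \<rho> = (Fun f ls, r, cs) \<and>
     subt_at s p = Fun (f, Some Q) (map (\<lambda>li. subst \<sigma> (label R li)) ls) \<and>
     j < length cs \<and>
     (\<forall>i < j. (lstep R)\<^sup>*\<^sup>* (subst \<sigma> (label R (fst (cs ! i)))) (subst \<sigma> (label R (snd (cs ! i))))) \<and>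
     t = subst \<sigma> (label R (fst (cs ! j))))"

definition lstep_inf :: "('f, 'v) crule set \<Rightarrow> ('f, 'v) lterm \<Rightarrow> bool" where
  "lstep_inf R s = infinite_seq_from (\<lambda>x y. lstep R x y \<or> lstep_cond R x y) s"

end

theory Submission
  imports Defs
begin

text \<open>Labelling a term with the full rule sets of its defined symbols turns every rewrite step
  and every descent into a condition into a labeled step of the corresponding kind. Conversely,
  by semi-finiteness every label occurring in a term reachable from a labelled term is a finite
  set of rules. Erasing the labels maps rule applications and condition descents back to rewrite
  steps and \<open>\<sqsupset>\<close>-steps, whereas the two kinds of label-removal steps leave the erased term
  unchanged and strictly decrease the total size of the labels. So infinitely many steps of an
  infinite labeled sequence survive erasure, which yields an infinite
  \<open>(\<rightarrow> \<union> \<sqsupset>)\<close>-sequence.\<close>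

lemma funs_Var [simp]: "funs (Var x) = {}"
  by (simp add: funs_def)

lemma funs_Fun [simp]: "funs (Fun f ts) = insert f (\<Union>t\<in>set ts. funs t)"
  by (simp add: funs_def)

lemma vars_Var [simp]: "vars (Var x) = {x}"
  by (simp add: vars_def)

lemma vars_Fun [simp]: "vars (Fun f ts) = (\<Union>t\<in>set ts. vars t)"
  by (simp add: vars_def)

lemma vars_label [simp]: "vars (label R t) = vars t"
  by (induction t) auto

lemma erase_label [simp]: "erase (label R t) = t"
  by (induction t) (auto simp: map_idI)

lemma label_subst: "label R (subst \<sigma> t) = subst (label R \<circ> \<sigma>) (label R t)"
  by (induction t) auto

lemma erase_subst: "erase (subst \<sigma> t) = subst (erase \<circ> \<sigma>) (erase t)"
  by (induction t) auto

lemma is_pos_label: "is_pos s p \<Longrightarrow> is_pos (label R s) p"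
  by (induction rule: is_pos.induct) (auto intro: is_pos.intros)

lemma subt_at_label: "is_pos s p \<Longrightarrow> subt_at (label R s) p = label R (subt_at s p)"
  by (induction rule: is_pos.induct) auto

lemma replace_at_label:
  "is_pos s p \<Longrightarrow> label R (replace_at s p u) = replace_at (label R s) p (label R u)"
  by (induction rule: is_pos.induct) (auto simp: map_update)

lemma is_pos_erase: "is_pos s p \<Longrightarrow> is_pos (erase s) p"
  by (induction rule: is_pos.induct) (auto intro: is_pos.intros)

lemma subt_at_erase: "is_pos s p \<Longrightarrow> subt_at (erase s) p = erase (subt_at s p)"
  by (induction rule: is_pos.induct) auto

lemma replace_at_erase:
  "is_pos s p \<Longrightarrow> erase (replace_at s p u) = replace_at (erase s) p (erase u)"
  by (induction rule: is_pos.induct) (auto simp: map_update)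

lemma replace_at_subt_at: "is_pos s p \<Longrightarrow> replace_at s p (subt_at s p) = s"
  by (induction rule: is_pos.induct) auto

lemma cctrs_lhs: "cctrs R \<Longrightarrow> (l, r, cs) \<in> R \<Longrightarrow> \<exists>f ls. l = Fun f ls"
  unfolding cctrs_def by fastforce

lemma cctrs_vars:
  assumes "cctrs R" and "(l, r, cs) \<in> R"
  shows "vars r \<subseteq> vars l \<union> (\<Union>i < length cs. vars (snd (cs ! i)))"
    and "\<forall>i < length cs. vars (fst (cs ! i)) \<subseteq> vars l \<union> (\<Union>j < i. vars (snd (cs ! j)))"
proof -
  have "(\<Union>(a, b) \<in> set cs. vars b) = (\<Union>i < length cs. vars (snd (cs ! i)))"
    by (auto simp: set_conv_nth split_beta)
  with assms show "vars r \<subseteq> vars l \<union> (\<Union>i < length cs. vars (snd (cs ! i)))"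
    unfolding cctrs_def by fastforce
  from assms show "\<forall>i < length cs. vars (fst (cs ! i)) \<subseteq> vars l \<union> (\<Union>j < i. vars (snd (cs ! j)))"
    unfolding cctrs_def by fastforce
qed

lemma rtranclp_map:
  assumes "\<And>x y. S x y \<Longrightarrow> T (f x) (f y)"
  shows "S\<^sup>*\<^sup>* a b \<Longrightarrow> T\<^sup>*\<^sup>* (f a) (f b)"
  by (induction rule: rtranclp_induct) (auto intro: rtranclp.rtrancl_into_rtrancl assms)

lemma rtranclp_project:
  assumes "\<And>x y. T x y \<Longrightarrow> P x \<Longrightarrow> P y \<and> (S (f x) (f y) \<or> f x = f y)"
  shows "T\<^sup>*\<^sup>* a b \<Longrightarrow> P a \<Longrightarrow> P b \<and> S\<^sup>*\<^sup>* (f a) (f b)"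
  by (induction rule: rtranclp_induct) (auto dest: assms intro: rtranclp.rtrancl_into_rtrancl)

lemma infinite_seq_from_map:
  assumes "\<And>x y. S x y \<Longrightarrow> T (f x) (f y)" and "infinite_seq_from S s"
  shows "infinite_seq_from T (f s)"
  using assms unfolding infinite_seq_from_def by (metis comp_apply)

lemma infinite_seq_fromI:
  assumes "A s" and "\<And>x. A x \<Longrightarrow> \<exists>y. A y \<and> S x y"
  shows "infinite_seq_from S s"
proof -
  obtain g where g: "\<And>x. A x \<Longrightarrow> A (g x) \<and> S x (g x)"
    using assms(2) by metis
  have "A ((g ^^ i) s)" for i
    by (induction i) (auto simp: assms(1) g)
  then show ?thesis
    unfolding infinite_seq_from_def by (intro exI[of _ "\<lambda>i. (g ^^ i) s"]) (simp add: g)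
qed

lemma infinite_seq_from_step:
  assumes "infinite_seq_from S s"
  obtains t where "S s t" and "infinite_seq_from S t"
proof -
  obtain u where "u 0 = s" and u: "\<forall>i. S (u i) (u (Suc i))"
    using assms unfolding infinite_seq_from_def by blast
  then have "infinite_seq_from S (u 1)"
    unfolding infinite_seq_from_def by (intro exI[of _ "\<lambda>i. u (Suc i)"]) simp
  with that show ?thesis using u \<open>u 0 = s\<close> by (metis One_nat_def)
qed

lemma infinite_seq_from_project:
  fixes m :: "'a \<Rightarrow> nat"
  assumes step: "\<And>x y. T x y \<Longrightarrow> P x \<Longrightarrow> P y \<and> (S (f x) (f y) \<or> f x = f y \<and> m y < m x)"
    and "P s" and "infinite_seq_from T s"
  shows "infinite_seq_from S (f s)"
proof -
  have visible_step: "\<exists>y. P y \<and> infinite_seq_from T y \<and> S (f x) (f y)"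
    if "P x" and "infinite_seq_from T x" for x
    using that
  proof (induction "m x" arbitrary: x rule: less_induct)
    case less
    obtain y where "T x y" and y: "infinite_seq_from T y"
      using less.prems(2) by (rule infinite_seq_from_step)
    with step less.prems(1) have "P y" and "S (f x) (f y) \<or> f x = f y \<and> m y < m x"
      by blast+
    then show ?case
      using less.hyps[of y] y by auto
  qed
  show ?thesis
    by (rule infinite_seq_fromI[where A = "\<lambda>z. \<exists>x. z = f x \<and> P x \<and> infinite_seq_from T x"])
      (use assms(2,3) visible_step in blast)+
qed

lemma label_redex:
  assumes "cctrs R" and "(l, r, cs) \<in> R" and "is_pos s p" and "subt_at s p = subst \<sigma> l"
  obtains f ls where "l = Fun f ls" and "(Fun f ls, r, cs) \<in> rules_of R f"
    and "subt_at (label R s) p =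
      Fun (f, Some (rules_of R f)) (map (\<lambda>li. subst (label R \<circ> \<sigma>) (label R li)) ls)"
proof -
  obtain f ls where l: "l = Fun f ls"
    using cctrs_lhs[OF assms(1,2)] by blast
  have "defined R f" and "(Fun f ls, r, cs) \<in> rules_of R f"
    using assms(2) l unfolding defined_def rules_of_def by force+
  moreover have "subt_at (label R s) p = label R (subst \<sigma> l)"
    using assms(3,4) by (simp add: subt_at_label)
  ultimately show ?thesis
    using that l by (simp add: label_subst)
qed

lemma cstep_imp_lstep_label:
  assumes "cctrs R"
  shows "cstep R s t \<Longrightarrow> lstep R (label R s) (label R t)"
proof (induction rule: cstep.induct)
  case (1 p s l r cs \<sigma>)
  have pos: "is_pos s p"
    using 1(1) by (simp add: poss_def)
  obtain f ls where "l = Fun f ls" and rule: "(Fun f ls, r, cs) \<in> rules_of R f" and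
    redex: "subt_at (label R s) p =
      Fun (f, Some (rules_of R f)) (map (\<lambda>li. subst (label R \<circ> \<sigma>) (label R li)) ls)"
    using label_redex[OF assms 1(2) pos 1(3)] .
  have conds: "\<forall>i<length cs. (lstep R)\<^sup>*\<^sup>* (subst (label R \<circ> \<sigma>) (label R (fst (cs ! i))))
      (subst (label R \<circ> \<sigma>) (label R (snd (cs ! i))))"
    using 1(4) rtranclp_map[of "\<lambda>x y. cstep R x y \<and> lstep R (label R x) (label R y)" "lstep R"]
    by (auto simp: label_subst[symmetric])
  have "label R (replace_at s p (subst \<sigma> r)) =
      replace_at (label R s) p (subst (label R \<circ> \<sigma>) (label R r))"
    using pos by (simp add: replace_at_label label_subst)
  moreover have "p \<in> poss (label R s)"
    using is_pos_label[OF pos] by (simp add: poss_def)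
  ultimately show ?case
    using lstep.apply_rule[OF _ rule refl redex conds refl] by simp
qed

lemma cond_sub_imp_lstep_cond_label:
  assumes "cctrs R" and "cond_sub R s t"
  shows "lstep_cond R (label R s) (label R t)"
proof -
  obtain p l r cs \<sigma> i where p: "p \<in> poss s" and rule: "(l, r, cs) \<in> R"
    and redex: "subt_at s p = subst \<sigma> l" and i: "i < length cs"
    and conds: "\<forall>j < i. (cstep R)\<^sup>*\<^sup>* (subst \<sigma> (fst (cs ! j))) (subst \<sigma> (snd (cs ! j)))"
    and t: "t = subst \<sigma> (fst (cs ! i))"
    using assms(2) unfolding cond_sub_def by blast
  have pos: "is_pos s p"
    using p by (simp add: poss_def)
  obtain f ls where "l = Fun f ls" and "(Fun f ls, r, cs) \<in> rules_of R f" and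
    "subt_at (label R s) p =
      Fun (f, Some (rules_of R f)) (map (\<lambda>li. subst (label R \<circ> \<sigma>) (label R li)) ls)"
    using label_redex[OF assms(1) rule pos redex] .
  moreover have "\<forall>j<i. (lstep R)\<^sup>*\<^sup>* (subst (label R \<circ> \<sigma>) (label R (fst (cs ! j))))
      (subst (label R \<circ> \<sigma>) (label R (snd (cs ! j))))"
    using conds rtranclp_map[of "cstep R" "lstep R" "label R", OF cstep_imp_lstep_label[OF assms(1)]]
    by (auto simp: label_subst[symmetric])
  moreover have "p \<in> poss (label R s)"
    using is_pos_label[OF pos] by (simp add: poss_def)
  ultimately show ?thesis
    unfolding lstep_cond_def using i t by (simp add: label_subst) blast
qed

definition finitely_labeled :: "('f, 'v) crule set \<Rightarrow> ('f, 'v) lterm \<Rightarrow> bool" where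
  "finitely_labeled R t \<longleftrightarrow> (\<forall>g Q. (g, Some Q) \<in> funs t \<longrightarrow> Q \<subseteq> R \<and> finite Q)"

lemma finitely_labeled_Var [simp]: "finitely_labeled R (Var x)"
  by (simp add: finitely_labeled_def)

lemma finitely_labeled_Fun [simp]:
  "finitely_labeled R (Fun (g, lab) ts) \<longleftrightarrow>
     (\<forall>Q. lab = Some Q \<longrightarrow> Q \<subseteq> R \<and> finite Q) \<and> (\<forall>t\<in>set ts. finitely_labeled R t)"
  unfolding finitely_labeled_def by auto blast

lemma finitely_labeled_subst:
  "finitely_labeled R (subst \<sigma> t) \<longleftrightarrow>
     finitely_labeled R t \<and> (\<forall>x\<in>vars t. finitely_labeled R (\<sigma> x))"
proof (induction t)
  case (Fun g ts)
  then show ?case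
    by (cases g) auto
qed simp

lemma finitely_labeled_label: "semi_finite R \<Longrightarrow> finitely_labeled R (label R t)"
  by (induction t) (auto simp: semi_finite_def rules_of_def)

lemma finitely_labeled_subst_label:
  "semi_finite R \<Longrightarrow>
    finitely_labeled R (subst \<sigma> (label R t)) \<longleftrightarrow> (\<forall>x\<in>vars t. finitely_labeled R (\<sigma> x))"
  by (simp add: finitely_labeled_subst finitely_labeled_label)

lemma finitely_labeled_subt_at:
  "is_pos s p \<Longrightarrow> finitely_labeled R s \<Longrightarrow> finitely_labeled R (subt_at s p)"
proof (induction rule: is_pos.induct)
  case (arg_pos i ts p f)
  then show ?case
    by (cases f) auto
qed simp

lemma finitely_labeled_replace_at:
  "is_pos s p \<Longrightarrow> finitely_labeled R s \<Longrightarrow> finitely_labeled R u \<Longrightarrow>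
    finitely_labeled R (replace_at s p u)"
proof (induction rule: is_pos.induct)
  case (arg_pos i ts p f)
  then show ?case
    by (cases f) (auto dest!: set_update_subset_insert[THEN subsetD])
qed simp

fun label_weight :: "('f \<times> 'q set option, 'v) term \<Rightarrow> nat" where
  "label_weight (Var x) = 0"
| "label_weight (Fun g ts) =
    (case snd g of None \<Rightarrow> 0 | Some Q \<Rightarrow> card Q) + sum_list (map label_weight ts)"

lemma label_weight_replace_at:
  "is_pos s p \<Longrightarrow> label_weight u < label_weight (subt_at s p) \<Longrightarrow>
    label_weight (replace_at s p u) < label_weight s"
proof (induction arbitrary: u rule: is_pos.induct)
  case (arg_pos i ts p f)
  then have "label_weight (replace_at (ts ! i) p u) < label_weight (ts ! i)"
    by simp
  moreover have "label_weight (ts ! i) \<le> sum_list (map label_weight ts)"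
    using arg_pos(1) by (intro member_le_sum_list) auto
  ultimately show ?case
    using arg_pos(1) by (simp add: map_update sum_list_update)
qed simp

lemma lstep_remove_rule:
  assumes "is_pos s p" and "subt_at s p = Fun (f, Some Q) ss" and "\<rho> \<in> Q"
    and "finitely_labeled R s" and "t = replace_at s p (Fun (f, Some (Q - {\<rho>})) ss)"
  shows "finitely_labeled R t \<and> erase t = erase s \<and> label_weight t < label_weight s"
proof -
  have "finitely_labeled R (Fun (f, Some Q) ss)"
    using finitely_labeled_subt_at[OF assms(1,4)] assms(2) by simp
  then have "finite Q" and "finitely_labeled R (Fun (f, Some (Q - {\<rho>})) ss)"
    by auto
  have "erase t = replace_at (erase s) p (subt_at (erase s) p)"
    using assms(1,2,5) by (simp add: replace_at_erase subt_at_erase)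
  also have "\<dots> = erase s"
    using assms(1) by (simp add: replace_at_subt_at is_pos_erase)
  finally have "erase t = erase s" .
  moreover have "card (Q - {\<rho>}) < card Q"
    using \<open>finite Q\<close> assms(3) by (rule card_Diff1_less)
  ultimately show ?thesis
    using assms \<open>finitely_labeled R (Fun (f, Some (Q - {\<rho>})) ss)\<close>
    by (simp add: finitely_labeled_replace_at label_weight_replace_at)
qed

lemma finitely_labeled_redex:
  assumes "is_pos s p" and "finitely_labeled R s" and "\<rho> \<in> Q" and "\<rho> = (Fun f ls, r, cs)"
    and "subt_at s p = Fun (f, Some Q) (map (\<lambda>li. subst \<sigma> (label R li)) ls)"
  shows "(Fun f ls, r, cs) \<in> R" and "\<forall>x \<in> vars (Fun f ls). finitely_labeled R (\<sigma> x)"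
  using finitely_labeled_subt_at[OF assms(1,2)] assms(3-5)
  by (auto simp: finitely_labeled_subst)

lemma finitely_labeled_cond_lhs:
  assumes "cctrs R" and "semi_finite R" and "(Fun f ls, r, cs) \<in> R"
    and "\<forall>x \<in> vars (Fun f ls). finitely_labeled R (\<sigma> x)" and "i < length cs"
    and "\<forall>j<i. \<forall>x\<in>vars (snd (cs ! j)). finitely_labeled R (\<sigma> x)"
  shows "finitely_labeled R (subst \<sigma> (label R (fst (cs ! i))))"
  using cctrs_vars(2)[OF assms(1,3)] assms(4-6)
  by (auto simp: finitely_labeled_subst_label[OF assms(2)]) blast

lemma erase_conditions:
  assumes "cctrs R" and "semi_finite R" and "(Fun f ls, r, cs) \<in> R"
    and "\<forall>x \<in> vars (Fun f ls). finitely_labeled R (\<sigma> x)"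
    and sim: "\<And>a b. T a b \<Longrightarrow> finitely_labeled R a \<Longrightarrow>
      finitely_labeled R b \<and> (cstep R (erase a) (erase b) \<or> erase a = erase b)"
  shows "k \<le> length cs \<Longrightarrow>
    \<forall>i<k. T\<^sup>*\<^sup>* (subst \<sigma> (label R (fst (cs ! i)))) (subst \<sigma> (label R (snd (cs ! i)))) \<Longrightarrow>
    \<forall>i<k. (\<forall>x\<in>vars (snd (cs ! i)). finitely_labeled R (\<sigma> x)) \<and>
      (cstep R)\<^sup>*\<^sup>* (subst (erase \<circ> \<sigma>) (fst (cs ! i))) (subst (erase \<circ> \<sigma>) (snd (cs ! i)))"
proof (induction k)
  case (Suc k)
  then have IH: "\<forall>i<k. (\<forall>x\<in>vars (snd (cs ! i)). finitely_labeled R (\<sigma> x)) \<and>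
      (cstep R)\<^sup>*\<^sup>* (subst (erase \<circ> \<sigma>) (fst (cs ! i))) (subst (erase \<circ> \<sigma>) (snd (cs ! i)))"
    by (simp add: comp_def)
  have "finitely_labeled R (subst \<sigma> (label R (fst (cs ! k))))"
    using IH Suc.prems(1) by (intro finitely_labeled_cond_lhs[OF assms(1-4)]) auto
  moreover have "T\<^sup>*\<^sup>* (subst \<sigma> (label R (fst (cs ! k)))) (subst \<sigma> (label R (snd (cs ! k))))"
    using Suc.prems(2) by simp
  ultimately have "finitely_labeled R (subst \<sigma> (label R (snd (cs ! k)))) \<and>
      (cstep R)\<^sup>*\<^sup>* (erase (subst \<sigma> (label R (fst (cs ! k)))))
        (erase (subst \<sigma> (label R (snd (cs ! k)))))"
    using rtranclp_project[where P = "finitely_labeled R", OF sim] by blast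
  with IH show ?case
    by (auto simp: finitely_labeled_subst_label[OF assms(2)] erase_subst less_Suc_eq comp_def)
qed simp

lemma lstep_erase:
  assumes cctrs: "cctrs R" and semi_finite: "semi_finite R"
  shows "lstep R s t \<Longrightarrow> finitely_labeled R s \<Longrightarrow> finitely_labeled R t \<and>
    (cstep R (erase s) (erase t) \<or> erase s = erase t \<and> label_weight t < label_weight s)"
proof (induction rule: lstep.induct)
  case (remove_nonunif p s f Q ss \<rho> l r cs us \<sigma> t)
  then show ?case
    using lstep_remove_rule[of s p f Q ss \<rho> R t] by (simp add: poss_def)
next
  case (remove_failed_cond p s \<rho> Q f ls r cs \<sigma> j \<tau> u t)
  then show ?case
    using lstep_remove_rule[of s p f Q _ \<rho> R t] by (simp add: poss_def)
next
  case (apply_rule p s \<rho> Q f ls r cs \<sigma> t)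
  have pos: "is_pos s p"
    using apply_rule(1) by (simp add: poss_def)
  have rule: "(Fun f ls, r, cs) \<in> R"
    and lhs: "\<forall>x \<in> vars (Fun f ls). finitely_labeled R (\<sigma> x)"
    using finitely_labeled_redex[OF pos apply_rule(7,2,3,4)] by blast+
  have conds: "\<forall>i<length cs. (\<forall>x\<in>vars (snd (cs ! i)). finitely_labeled R (\<sigma> x)) \<and>
      (cstep R)\<^sup>*\<^sup>* (subst (erase \<circ> \<sigma>) (fst (cs ! i))) (subst (erase \<circ> \<sigma>) (snd (cs ! i)))"
    by (rule erase_conditions[OF cctrs semi_finite rule lhs _ order_refl apply_rule(6)]) auto
  have "\<forall>x\<in>vars r. finitely_labeled R (\<sigma> x)"
    using cctrs_vars(1)[OF cctrs rule] lhs conds by blast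
  then have "finitely_labeled R t"
    using apply_rule(5,7) pos
    by (simp add: finitely_labeled_replace_at finitely_labeled_subst_label[OF semi_finite])
  moreover have "cstep R (erase s) (erase t)"
  proof -
    have "subt_at (erase s) p = subst (erase \<circ> \<sigma>) (Fun f ls)"
      using pos apply_rule(4) by (simp add: subt_at_erase erase_subst)
    moreover have "erase t = replace_at (erase s) p (subst (erase \<circ> \<sigma>) r)"
      using pos apply_rule(5) by (simp add: replace_at_erase erase_subst)
    ultimately show ?thesis
      using is_pos_erase[OF pos] rule conds by (auto simp: poss_def intro: cstep.intros)
  qed
  ultimately show ?case
    by blast
qed

lemma lstep_cond_erase:
  assumes cctrs: "cctrs R" and semi_finite: "semi_finite R"
    and "lstep_cond R s t" and "finitely_labeled R s"
  shows "finitely_labeled R t \<and> cond_sub R (erase s) (erase t)"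
proof -
  obtain p \<rho> Q f ls r cs \<sigma> j where p: "p \<in> poss s" and "\<rho> \<in> Q" and "\<rho> = (Fun f ls, r, cs)"
    and redex: "subt_at s p = Fun (f, Some Q) (map (\<lambda>li. subst \<sigma> (label R li)) ls)"
    and j: "j < length cs"
    and sat: "\<forall>i < j. (lstep R)\<^sup>*\<^sup>* (subst \<sigma> (label R (fst (cs ! i)))) (subst \<sigma> (label R (snd (cs ! i))))"
    and t: "t = subst \<sigma> (label R (fst (cs ! j)))"
    using assms(3) unfolding lstep_cond_def by blast
  have pos: "is_pos s p"
    using p by (simp add: poss_def)
  have rule: "(Fun f ls, r, cs) \<in> R"
    and lhs: "\<forall>x \<in> vars (Fun f ls). finitely_labeled R (\<sigma> x)"
    using finitely_labeled_redex[OF pos assms(4) \<open>\<rho> \<in> Q\<close> \<open>\<rho> = _\<close> redex] by blast+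
  have conds: "\<forall>i<j. (\<forall>x\<in>vars (snd (cs ! i)). finitely_labeled R (\<sigma> x)) \<and>
      (cstep R)\<^sup>*\<^sup>* (subst (erase \<circ> \<sigma>) (fst (cs ! i))) (subst (erase \<circ> \<sigma>) (snd (cs ! i)))"
    using erase_conditions[OF cctrs semi_finite rule lhs _ less_imp_le[OF j] sat]
      lstep_erase[OF cctrs semi_finite] by blast
  have "finitely_labeled R t"
    unfolding t using conds by (intro finitely_labeled_cond_lhs[OF cctrs semi_finite rule lhs j]) simp
  moreover have "cond_sub R (erase s) (erase t)"
  proof -
    have "p \<in> poss (erase s)"
      using is_pos_erase[OF pos] by (simp add: poss_def)
    moreover have "subt_at (erase s) p = subst (erase \<circ> \<sigma>) (Fun f ls)"
      using pos redex by (simp add: subt_at_erase erase_subst)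
    moreover have "erase t = subst (erase \<circ> \<sigma>) (fst (cs ! j))"
      using t by (simp add: erase_subst)
    ultimately show ?thesis
      unfolding cond_sub_def using rule j conds by blast
  qed
  ultimately show ?thesis
    by blast
qed

theorem lemma4:
  fixes R :: "('f, 'v) crule set" and s :: "('f, 'v) term"
  assumes "infinite (UNIV :: 'v set)"
    and "cctrs R" and "semi_finite R"
  shows "\<not> quasi_decreasing R s \<longleftrightarrow> lstep_inf R (label R s)"
proof
  assume "\<not> quasi_decreasing R s"
  then show "lstep_inf R (label R s)"
    unfolding quasi_decreasing_def lstep_inf_def not_not
  proof (rule infinite_seq_from_map[rotated])
    fix x y
    assume "cstep R x y \<or> cond_sub R x y"
    then show "lstep R (label R x) (label R y) \<or> lstep_cond R (label R x) (label R y)"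
      using cstep_imp_lstep_label[OF assms(2)] cond_sub_imp_lstep_cond_label[OF assms(2)] by blast
  qed
next
  assume "lstep_inf R (label R s)"
  then have "infinite_seq_from (\<lambda>x y. cstep R x y \<or> cond_sub R x y) (erase (label R s))"
    unfolding lstep_inf_def
  proof (rule infinite_seq_from_project[where P = "finitely_labeled R" and m = label_weight, rotated 2])
    fix x y
    assume "lstep R x y \<or> lstep_cond R x y" and "finitely_labeled R x"
    then show "finitely_labeled R y \<and> ((cstep R (erase x) (erase y) \<or> cond_sub R (erase x) (erase y)) \<or>
        erase x = erase y \<and> label_weight y < label_weight x)"
      using lstep_erase[OF assms(2,3)] lstep_cond_erase[OF assms(2,3)] by blast
  qed (rule finitely_labeled_label[OF assms(3)])
  then show "\<not> quasi_decreasing R s"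
    by (simp add: quasi_decreasing_def)
qed

end
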